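(* Let $D=\{(x^i,y^i)\}_{i=1}^n$ be a training set and $JJ=\{JJ_{x^i}\}_{i=1}^n$ a collection of substructure sets such that $D$ is linearly separable with respect to $JJ$ with margin $\delta^{JJ}>0$, and let $R^{JJ}$ be the mixed assignment radius of $D$ with respect to $JJ$. Run the SWVP algorithm on $D$ with these substructure sets, and suppose that at every update the weights $\gamma$ returned by $\textsc{SetGamma}$ satisfy the $\gamma$ selection conditions (1) and (2) with respect to the current weight vector. Then the total number $t$ of updates made by SWVP satisfies $$t\le \frac{(R^{JJ})^2}{(\delta^{JJ})^2}.$$ In particular, SWVP terminates (converges to a parameter vector making no further updates on $D$).
   Context: Structured prediction setting: for each input $x$ the output space is $\mathcal{Y}(x)=D_Y^{L_x}$ (vectors of length $L_x$ over a finite domain $D_Y$), and a feature map $\phi(x,y')\in\mathbb{R}^d$ is given for $y'\in\mathcal{Y}(x)$. Write $\Delta\phi(x,y,z)=\phi(x,y)-\phi(x,z)$ and $[n]=\{1,\dots,n\}$. The training set is $D=\{(x^i,y^i)\}_{i=1}^n$ with $y^i\in\mathcal{Y}(x^i)$. Mixed assignment: for $y^*,y\in\mathcal{Y}(x)$ and $J\subseteq[L_x]$, $m^J(y^*,y)\in\mathcal{Y}(x)$ has $k$-th coordinate $y^*_k$ if $k\in J$ and $y_k$ otherwise. For each training example a substructure set $JJ_{x^i}\subseteq 2^{[L_{x^i}]}$ is fixed. SWVP algorithm: initialize $\mathbf{w}=0$; repeatedly cycle through the examples $(x,y)\in D$; for each, compute $y^*=\arg\max_{y'\in\mathcal{Y}(x)}\mathbf{w}\cdot\phi(x,y')$.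 If $y^*\ne y$, write $m^J=m^J(y^*,y)$, let $I=\{J\in JJ_x: m^J\neq y\}$, $I^v=\{J\in I:\mathbf{w}\cdot\Delta\phi(x,y,m^J)\le 0\}$, $I^{nv}=\{J\in I:\mathbf{w}\cdot\Delta\phi(x,y,m^J)>0\}$ (so $I=I^v\cup I^{nv}$), obtain weights $\gamma(m^J)$, $J\in I$, from a procedure $\textsc{SetGamma}$, and perform the update $\mathbf{w}\leftarrow\mathbf{w}+\sum_{J\in I}\gamma(m^J)\Delta\phi(x,y,m^J)$. Stop when a full pass makes no update. $\gamma$ selection conditions (for the current $\mathbf{w}$, before the update): (1) $\gamma(m^J)\ge0$ for all $J\in I$ and $\sum_{J\in I}\gamma(m^J)=1$; (2) $\mathbf{w}\cdot\sum_{J\in I}\gamma(m^J)\Delta\phi(x,y,m^J)\le 0$. $D$ is linearly separable with respect to $JJ$ with margin $\delta^{JJ}>0$ if there is $\mathbf{u}\in\mathbb{R}^d$ with $\|\mathbf{u}\|_2=1$ such that $\mathbf{u}\cdot\Delta\phi(x^i,y^i,m^J(z,y^i))\ge\delta^{JJ}$ for all $i$, all $z\in\mathcal{Y}(x^i)$ and all $J\in JJ_{x^i}$ with $m^J(z,y^i)\ne y^i$. The mixed assignment radius with respect to $JJ$ is a constant $R^{JJ}$ such that $\|\Delta\phi(x^i,y^i,m^J(z,y^i))\|\le R^{JJ}$ for all $i$, $z\in\mathcal{Y}(x^i)$, $J\in JJ_{x^i}$. *)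

theory Defs
  imports "HOL-Analysis.Analysis"
begin

text \<open>Output space Y(x) = D_Y^{L_x}: lists of length L x over the finite domain DY.
  Positions are indexed 0-based: [L_x] is rendered as {0..<L_x}.\<close>
definition outputs :: "'a set \<Rightarrow> nat \<Rightarrow> 'a list set" where
  "outputs DY l = {ys. length ys = l \<and> set ys \<subseteq> DY}"

definition mixed :: "nat set \<Rightarrow> 'a list \<Rightarrow> 'a list \<Rightarrow> 'a list" where
  "mixed J ystar y = map (\<lambda>k. if k \<in> J then ystar ! k else y ! k) [0..<length y]"

definition dphi :: "('x \<Rightarrow> 'a list \<Rightarrow> 'v::real_vector) \<Rightarrow> 'x \<Rightarrow> 'a list \<Rightarrow> 'a list \<Rightarrow> 'v" where
  "dphi phi x y z = phi x y - phi x z"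

definition is_argmax ::
  "('x \<Rightarrow> 'a list \<Rightarrow> 'v::real_inner) \<Rightarrow> 'a set \<Rightarrow> ('x \<Rightarrow> nat) \<Rightarrow> 'v \<Rightarrow> 'x \<Rightarrow> 'a list \<Rightarrow> bool" where
  "is_argmax phi DY L w x ys \<longleftrightarrow>
     ys \<in> outputs DY (L x) \<and> (\<forall>y' \<in> outputs DY (L x). w \<bullet> phi x y' \<le> w \<bullet> phi x ys)"

definition upd_set :: "nat set set \<Rightarrow> 'a list \<Rightarrow> 'a list \<Rightarrow> nat set set" where
  "upd_set JJx ystar y = {J \<in> JJx. mixed J ystar y \<noteq> y}"

definition gamma_conditions ::
  "('x \<Rightarrow> 'a list \<Rightarrow> 'v::real_inner) \<Rightarrow> 'x \<Rightarrow> 'a list \<Rightarrow> 'a list \<Rightarrow> nat set set \<Rightarrow> 'v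
    \<Rightarrow> ('a list \<Rightarrow> real) \<Rightarrow> bool" where
  "gamma_conditions phi x y ystar JJx w gam \<longleftrightarrow>
     (\<forall>J \<in> upd_set JJx ystar y. gam (mixed J ystar y) \<ge> 0) \<and>
     (\<Sum>J \<in> upd_set JJx ystar y. gam (mixed J ystar y)) = 1 \<and>
     w \<bullet> (\<Sum>J \<in> upd_set JJx ystar y. gam (mixed J ystar y) *\<^sub>R dphi phi x y (mixed J ystar y)) \<le> 0"

text \<open>Linear separability of D w.r.t. JJ with margin delta.  Example i is D ! i, JJ i = JJ_{x^i}.\<close>
definition separable_margin ::
  "('x \<Rightarrow> 'a list \<Rightarrow> 'v::real_inner) \<Rightarrow> 'a set \<Rightarrow> ('x \<Rightarrow> nat) \<Rightarrow> ('x \<times> 'a list) list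
    \<Rightarrow> (nat \<Rightarrow> nat set set) \<Rightarrow> real \<Rightarrow> bool" where
  "separable_margin phi DY L D JJ \<delta> \<longleftrightarrow>
     (\<exists>u. norm u = 1 \<and>
        (\<forall>i < length D. \<forall>z \<in> outputs DY (L (fst (D ! i))). \<forall>J \<in> JJ i.
           mixed J z (snd (D ! i)) \<noteq> snd (D ! i) \<longrightarrow>
           u \<bullet> dphi phi (fst (D ! i)) (snd (D ! i)) (mixed J z (snd (D ! i))) \<ge> \<delta>))"

definition mixed_radius ::
  "('x \<Rightarrow> 'a list \<Rightarrow> 'v::real_inner) \<Rightarrow> 'a set \<Rightarrow> ('x \<Rightarrow> nat) \<Rightarrow> ('x \<times> 'a list) list
    \<Rightarrow> (nat \<Rightarrow> nat set set) \<Rightarrow> real \<Rightarrow> bool" where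
  "mixed_radius phi DY L D JJ R \<longleftrightarrow>
     (\<forall>i < length D. \<forall>z \<in> outputs DY (L (fst (D ! i))). \<forall>J \<in> JJ i.
        norm (dphi phi (fst (D ! i)) (snd (D ! i)) (mixed J z (snd (D ! i)))) \<le> R)"

text \<open>One visit of SWVP: the k-th visit (0-based) processes example k mod n (cyclic order).
  w is the weight vector before the visit, ys the computed argmax y*, gam the weights
  returned by SetGamma (only relevant if an update happens), w' the weight vector after.\<close>
definition swvp_visit ::
  "('x \<Rightarrow> 'a list \<Rightarrow> 'v::real_inner) \<Rightarrow> 'a set \<Rightarrow> ('x \<Rightarrow> nat) \<Rightarrow> ('x \<times> 'a list) list
    \<Rightarrow> (nat \<Rightarrow> nat set set) \<Rightarrow> 'v \<Rightarrow> nat \<Rightarrow> 'a list \<Rightarrow> ('a list \<Rightarrow> real) \<Rightarrow> 'v \<Rightarrow> bool" where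
  "swvp_visit phi DY L D JJ w k ys gam w' \<longleftrightarrow>
     (let i = k mod length D; x = fst (D ! i); y = snd (D ! i) in
       is_argmax phi DY L w x ys \<and>
       (if ys = y then w' = w
        else gamma_conditions phi x y ys (JJ i) w gam \<and>
             w' = w + (\<Sum>J \<in> upd_set (JJ i) ys y. gam (mixed J ys y) *\<^sub>R dphi phi x y (mixed J ys y))))"

definition is_update :: "('x \<times> 'a list) list \<Rightarrow> (nat \<Rightarrow> 'a list) \<Rightarrow> nat \<Rightarrow> bool" where
  "is_update D ys k \<longleftrightarrow> ys k \<noteq> snd (D ! (k mod length D))"

definition stopped :: "('x \<times> 'a list) list \<Rightarrow> (nat \<Rightarrow> 'a list) \<Rightarrow> nat \<Rightarrow> bool" where
  "stopped D ys k \<longleftrightarrow>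
     (\<exists>p. Suc p * length D \<le> k \<and>
          (\<forall>j \<in> {p * length D ..< Suc p * length D}. \<not> is_update D ys j))"

text \<open>ws, ys, gam describe an execution of SWVP performing (at least) K visits:
  ws k is the weight vector before visit k, ys k the argmax, gam k the SetGamma output.\<close>
definition swvp_run ::
  "('x \<Rightarrow> 'a list \<Rightarrow> 'v::real_inner) \<Rightarrow> 'a set \<Rightarrow> ('x \<Rightarrow> nat) \<Rightarrow> ('x \<times> 'a list) list
    \<Rightarrow> (nat \<Rightarrow> nat set set) \<Rightarrow> (nat \<Rightarrow> 'v) \<Rightarrow> (nat \<Rightarrow> 'a list) \<Rightarrow> (nat \<Rightarrow> 'a list \<Rightarrow> real)
    \<Rightarrow> nat \<Rightarrow> bool" where
  "swvp_run phi DY L D JJ ws ys gam K \<longleftrightarrow>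
     ws 0 = 0 \<and>
     (\<forall>k < K. \<not> stopped D ys k \<and>
        swvp_visit phi DY L D JJ (ws k) k (ys k) (gam k) (ws (Suc k)))"

definition num_updates :: "('x \<times> 'a list) list \<Rightarrow> (nat \<Rightarrow> 'a list) \<Rightarrow> nat \<Rightarrow> nat" where
  "num_updates D ys K = card {k. k < K \<and> is_update D ys k}"

end

theory Submission
  imports Defs
begin

text \<open>This is the classical perceptron convergence argument. An update adds a convex combination
  of the vectors \<open>\<Delta>\<phi>(x, y, m\<^sup>J)\<close>. Against the separating unit vector \<open>u\<close> each of them
  gains at least \<open>\<delta>\<close>, so \<open>u \<bullet> w\<close> grows by at least \<open>\<delta>\<close> per update; each has norm at most \<open>R\<close>,
  and by selection condition (2) the combination does not point along \<open>w\<close>, so \<open>\<parallel>w\<parallel>\<^sup>2\<close> grows by at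
  most \<open>R\<^sup>2\<close>. After \<open>t\<close> updates Cauchy-Schwarz gives \<open>(\<delta> t)\<^sup>2 \<le> \<parallel>w\<parallel>\<^sup>2 \<le> R\<^sup>2 t\<close>. Termination
  follows because every pass that does not stop the algorithm makes an update.\<close>

lemma inner_convex_combination_ge:
  fixes d :: "'j \<Rightarrow> 'v::real_inner"
  assumes "\<forall>j\<in>I. 0 \<le> c j" and "sum c I = 1" and "\<forall>j\<in>I. \<delta> \<le> u \<bullet> d j"
  shows "\<delta> \<le> u \<bullet> (\<Sum>j\<in>I. c j *\<^sub>R d j)"
proof -
  have "\<delta> = (\<Sum>j\<in>I. c j * \<delta>)"
    using assms(2) by (simp add: sum_distrib_right[symmetric])
  also have "\<dots> \<le> (\<Sum>j\<in>I. c j * (u \<bullet> d j))"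
    by (rule sum_mono) (use assms(1,3) in \<open>auto intro: mult_left_mono\<close>)
  also have "\<dots> = u \<bullet> (\<Sum>j\<in>I. c j *\<^sub>R d j)"
    by (simp add: inner_sum_right)
  finally show ?thesis .
qed

lemma norm_convex_combination_le:
  fixes d :: "'j \<Rightarrow> 'v::real_normed_vector"
  assumes "\<forall>j\<in>I. 0 \<le> c j" and "sum c I = 1" and "\<forall>j\<in>I. norm (d j) \<le> R"
  shows "norm (\<Sum>j\<in>I. c j *\<^sub>R d j) \<le> R"
proof -
  have "norm (\<Sum>j\<in>I. c j *\<^sub>R d j) \<le> (\<Sum>j\<in>I. norm (c j *\<^sub>R d j))"
    by (rule norm_sum)
  also have "\<dots> = (\<Sum>j\<in>I. c j * norm (d j))"
    by (rule sum.cong) (use assms(1) in auto)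
  also have "\<dots> \<le> (\<Sum>j\<in>I. c j * R)"
    by (rule sum_mono) (use assms(1,3) in \<open>auto intro: mult_left_mono\<close>)
  also have "\<dots> = R"
    using assms(2) by (simp add: sum_distrib_right[symmetric])
  finally show ?thesis .
qed

lemma norm_add_square_le_of_inner_nonpos:
  fixes w v :: "'v::real_inner"
  assumes "w \<bullet> v \<le> 0" and "norm v \<le> R"
  shows "(norm (w + v))\<^sup>2 \<le> (norm w)\<^sup>2 + R\<^sup>2"
proof -
  have "(norm v)\<^sup>2 \<le> R\<^sup>2"
    using assms(2) norm_ge_zero power_mono by blast
  moreover have "(norm (w + v))\<^sup>2 = (norm w)\<^sup>2 + 2 * (w \<bullet> v) + (norm v)\<^sup>2"
    by (simp add: power2_norm_eq_inner inner_add inner_commute)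
  ultimately show ?thesis
    using assms(1) by linarith
qed

lemma perceptron_mistake_bound:
  fixes u w :: "'v::real_inner" and t :: real
  assumes "norm u = 1" and "0 < \<delta>" and "0 \<le> t"
    and progress: "\<delta> * t \<le> u \<bullet> w" and growth: "(norm w)\<^sup>2 \<le> R\<^sup>2 * t"
  shows "t \<le> R\<^sup>2 / \<delta>\<^sup>2"
proof (cases "t = 0")
  case False
  have "\<delta> * t \<le> norm w"
    using progress norm_cauchy_schwarz[of u w] assms(1) by simp
  then have "(\<delta> * t)\<^sup>2 \<le> (norm w)\<^sup>2"
    using assms(2,3) by (simp add: power_mono)
  with growth have "\<delta>\<^sup>2 * t * t \<le> R\<^sup>2 * t"
    by (simp add: power2_eq_square algebra_simps)
  then have "\<delta>\<^sup>2 * t \<le> R\<^sup>2"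
    using False assms(3) by (simp add: mult_le_cancel_right_pos)
  then show ?thesis
    using assms(2) by (simp add: field_simps)
qed simp

definition separates ::
  "('x \<Rightarrow> 'a list \<Rightarrow> 'v::real_inner) \<Rightarrow> 'a set \<Rightarrow> ('x \<Rightarrow> nat) \<Rightarrow> ('x \<times> 'a list) list
    \<Rightarrow> (nat \<Rightarrow> nat set set) \<Rightarrow> 'v \<Rightarrow> real \<Rightarrow> bool" where
  "separates phi DY L D JJ u \<delta> \<longleftrightarrow>
     (\<forall>i < length D. \<forall>z \<in> outputs DY (L (fst (D ! i))). \<forall>J \<in> JJ i.
        mixed J z (snd (D ! i)) \<noteq> snd (D ! i) \<longrightarrow>
        \<delta> \<le> u \<bullet> dphi phi (fst (D ! i)) (snd (D ! i)) (mixed J z (snd (D ! i))))"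

lemma separable_margin_iff:
  "separable_margin phi DY L D JJ \<delta> \<longleftrightarrow> (\<exists>u. norm u = 1 \<and> separates phi DY L D JJ u \<delta>)"
  unfolding separable_margin_def separates_def by blast

lemma swvp_visit_no_update:
  "swvp_visit phi DY L D JJ w k ys gam w' \<Longrightarrow> ys = snd (D ! (k mod length D)) \<Longrightarrow> w' = w"
  unfolding swvp_visit_def Let_def by auto

lemma swvp_visit_update:
  fixes phi :: "'x \<Rightarrow> 'a list \<Rightarrow> 'v::real_inner"
  assumes visit: "swvp_visit phi DY L D JJ w k ys gam w'"
    and update: "ys \<noteq> snd (D ! (k mod length D))"
    and "D \<noteq> []"
    and sep: "separates phi DY L D JJ u \<delta>"
    and rad: "mixed_radius phi DY L D JJ R"
  shows "u \<bullet> w + \<delta> \<le> u \<bullet> w'" and "(norm w')\<^sup>2 \<le> (norm w)\<^sup>2 + R\<^sup>2"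
proof -
  define i where "i = k mod length D"
  define x where "x = fst (D ! i)"
  define y where "y = snd (D ! i)"
  let ?I = "upd_set (JJ i) ys y"
  let ?c = "\<lambda>J. gam (mixed J ys y)"
  let ?d = "\<lambda>J. dphi phi x y (mixed J ys y)"
  let ?v = "\<Sum>J\<in>?I. ?c J *\<^sub>R ?d J"
  have i: "i < length D"
    using \<open>D \<noteq> []\<close> by (simp add: i_def)
  have argmax: "is_argmax phi DY L w x ys"
    and gamma: "gamma_conditions phi x y ys (JJ i) w gam"
    and step: "w' = w + ?v"
    using visit update unfolding swvp_visit_def Let_def i_def x_def y_def by auto
  have ys: "ys \<in> outputs DY (L x)"
    using argmax unfolding is_argmax_def by simp
  have c: "\<forall>J\<in>?I. 0 \<le> ?c J" "sum ?c ?I = 1" and descent: "w \<bullet> ?v \<le> 0"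
    using gamma unfolding gamma_conditions_def by auto
  have "\<forall>J\<in>?I. \<delta> \<le> u \<bullet> ?d J"
    using sep i ys unfolding separates_def upd_set_def x_def y_def by blast
  then have "\<delta> \<le> u \<bullet> ?v"
    by (rule inner_convex_combination_ge[OF c])
  then show "u \<bullet> w + \<delta> \<le> u \<bullet> w'"
    by (simp add: step inner_add_right)
  have "\<forall>J\<in>?I. norm (?d J) \<le> R"
    using rad i ys unfolding mixed_radius_def upd_set_def x_def y_def by blast
  then have "norm ?v \<le> R"
    by (rule norm_convex_combination_le[OF c])
  then show "(norm w')\<^sup>2 \<le> (norm w)\<^sup>2 + R\<^sup>2"
    unfolding step by (rule norm_add_square_le_of_inner_nonpos[OF descent])
qed

lemma num_updates_Suc:
  "num_updates D ys (Suc k) = num_updates D ys k + (if is_update D ys k then 1 else 0)"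
proof -
  have "{j. j < Suc k \<and> is_update D ys j} =
        {j. j < k \<and> is_update D ys j} \<union> (if is_update D ys k then {k} else {})"
    by (auto simp: less_Suc_eq)
  then show ?thesis
    unfolding num_updates_def by auto
qed

lemma swvp_run_progress:
  fixes phi :: "'x \<Rightarrow> 'a list \<Rightarrow> 'v::real_inner"
  assumes run: "swvp_run phi DY L D JJ ws ys gam K" and "k \<le> K" and "D \<noteq> []"
    and sep: "separates phi DY L D JJ u \<delta>"
    and rad: "mixed_radius phi DY L D JJ R"
  shows "\<delta> * num_updates D ys k \<le> u \<bullet> ws k \<and> (norm (ws k))\<^sup>2 \<le> R\<^sup>2 * num_updates D ys k"
  using \<open>k \<le> K\<close>
proof (induction k)
  case 0
  then show ?case
    using run by (simp add: swvp_run_def num_updates_def)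
next
  case (Suc k)
  have visit: "swvp_visit phi DY L D JJ (ws k) k (ys k) (gam k) (ws (Suc k))"
    using run Suc.prems unfolding swvp_run_def by simp
  show ?case
  proof (cases "is_update D ys k")
    case True
    then have "ys k \<noteq> snd (D ! (k mod length D))"
      unfolding is_update_def .
    note step = swvp_visit_update[OF visit this \<open>D \<noteq> []\<close> sep rad]
    show ?thesis
      using Suc step True by (simp add: num_updates_Suc algebra_simps)
  next
    case False
    then have "ws (Suc k) = ws k"
      using swvp_visit_no_update[OF visit] unfolding is_update_def by blast
    then show ?thesis
      using Suc False by (simp add: num_updates_Suc)
  qed
qed

lemma num_updates_gt_of_update:
  assumes "k \<le> j" and "j < k'" and "is_update D ys j"
  shows "num_updates D ys k < num_updates D ys k'"
proof -
  let ?A = "{i. i < k \<and> is_update D ys i}"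
  have "insert j ?A \<subseteq> {i. i < k' \<and> is_update D ys i}"
    using assms by auto
  then have "card (insert j ?A) \<le> num_updates D ys k'"
    unfolding num_updates_def by (rule card_mono[rotated]) simp
  moreover have "card (insert j ?A) = Suc (num_updates D ys k)"
    using assms(1) unfolding num_updates_def by simp
  ultimately show ?thesis
    by simp
qed

lemma stopped_mono: "stopped D ys k \<Longrightarrow> k \<le> k' \<Longrightarrow> stopped D ys k'"
  unfolding stopped_def using le_trans by blast

lemma passes_le_num_updates:
  assumes "\<not> stopped D ys (P * length D)"
  shows "P \<le> num_updates D ys (P * length D)"
  using assms
proof (induction P)
  case (Suc P)
  have "\<not> stopped D ys (P * length D)"
    using Suc.prems stopped_mono[of D ys "P * length D" "Suc P * length D"] by auto
  with Suc.IH have IH: "P \<le> num_updates D ys (P * length D)" .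
  obtain j where "j \<in> {P * length D ..< Suc P * length D}" and "is_update D ys j"
    using Suc.prems unfolding stopped_def by blast
  then have "num_updates D ys (P * length D) < num_updates D ys (Suc P * length D)"
    by (intro num_updates_gt_of_update) auto
  with IH show ?case
    by simp
qed simp

theorem theorem1:
  fixes phi :: "'x \<Rightarrow> 'a list \<Rightarrow> 'v::euclidean_space"
    and DY :: "'a set" and L :: "'x \<Rightarrow> nat"
    and D :: "('x \<times> 'a list) list" and JJ :: "nat \<Rightarrow> nat set set"
    and \<delta> R :: real
  assumes "finite DY"
    and "D \<noteq> []"
    and "\<forall>i < length D. snd (D ! i) \<in> outputs DY (L (fst (D ! i)))"
    and "\<forall>i < length D. JJ i \<subseteq> Pow {..<L (fst (D ! i))}"
    and "\<delta> > 0"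
    and "separable_margin phi DY L D JJ \<delta>"
    and "mixed_radius phi DY L D JJ R"
  shows "(\<forall>ws ys gam K. swvp_run phi DY L D JJ ws ys gam K \<longrightarrow>
            real (num_updates D ys K) \<le> R\<^sup>2 / \<delta>\<^sup>2)
       \<and> (\<forall>ws ys gam. \<exists>K. \<not> swvp_run phi DY L D JJ ws ys gam K)"
proof -
  obtain u where u: "norm u = 1" "separates phi DY L D JJ u \<delta>"
    using assms(6) separable_margin_iff by blast
  have bound: "real (num_updates D ys K) \<le> R\<^sup>2 / \<delta>\<^sup>2"
    if "swvp_run phi DY L D JJ ws ys gam K" for ws ys gam K
    using swvp_run_progress[OF that order_refl assms(2) u(2) assms(7)]
    by (intro perceptron_mistake_bound[OF u(1) assms(5)]) auto
  have "\<exists>K. \<not> swvp_run phi DY L D JJ ws ys gam K" for ws ys gam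
  proof (rule ccontr)
    define N where "N = nat \<lceil>R\<^sup>2 / \<delta>\<^sup>2\<rceil>"
    define M where "M = Suc N * length D"
    assume "\<nexists>K. \<not> swvp_run phi DY L D JJ ws ys gam K"
    then have "swvp_run phi DY L D JJ ws ys gam M" and "swvp_run phi DY L D JJ ws ys gam (Suc M)"
      by blast+
    have "real (num_updates D ys M) \<le> real N"
      using bound[of ws ys gam M] \<open>swvp_run phi DY L D JJ ws ys gam M\<close> real_nat_ceiling_ge
      unfolding N_def by (meson order_trans)
    moreover have "\<not> stopped D ys M"
      using \<open>swvp_run phi DY L D JJ ws ys gam (Suc M)\<close> unfolding swvp_run_def by simp
    ultimately show False
      using passes_le_num_updates[of D ys "Suc N"] unfolding M_def by simp
  qed
  with bound show ?thesis
    by blast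
qed

end
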